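(* Run the mechanism BFM-SWM described in the context with arbitrary $B>0$, $\alpha>1$, $\beta>1$, $\epsilon>0$, $\ell\in\{1,2\}$, with all sellers behaving truthfully. Then $$\sum_{i=1}^{\ell}\sum_{t=1}^{M}v(S_{i,t})\ \le\ \frac{2\ell\cdot\alpha\big(v(S^* )-p(S^* )\big)}{(\alpha-1)(1-1/\beta)}.$$
   Context: Setting. $\mathcal{N}$ is a finite set of $n$ sellers. The valuation $v:2^{\mathcal{N}}\to\mathbb{R}_{\ge 0}$ satisfies $v(\emptyset)=0$ and is submodular (for $X\subseteq Y\subseteq\mathcal{N}$ and $u\notin Y$, $v(u\mid Y)\le v(u\mid X)$), not necessarily monotone, where $v(S\mid T)=v(S\cup T)-v(T)$, $v(u\mid T)=v(\{u\}\mid T)$. Each seller $u$ has a private cost $c(u)\ge 0$; $c(X)=\sum_{u\in X}c(u)$, $p(X)=\sum_{u\in X}p(u)$. $B>0$ is the budget, $[\ell]=\{1,\dots,\ell\}$. Sellers behave truthfully: a seller $u$ offered price $q$ accepts iff $c(u)\le q$. Mechanism BFM-SWM (inputs $B$, $\alpha>1$, $\beta>1$, $\epsilon>0$, $\ell\in\{1,2\}$): 1. Offer every seller the price $B$; let $R$ be the set of sellers who accept, and set $p(u)=B$ for $u\in R$. 2. Set $t=0$, $\rho_0=\epsilon/\alpha$, $u^*=\emptyset$ ($u^*$ is a set of at most one seller), and $S_{i,0}=\emptyset$ for $i\in[\ell]$. 3. Repeat rounds: set $t\leftarrow t+1$, $\rho_t=\alpha\rho_{t-1}$, $S_{i,t}=\emptyset$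 for all $i\in[\ell]$. Process the sellers $u\in R\setminus(\bigcup_{i=1}^{\ell}S_{i,t-1}\cup u^* )$ one at a time in a fixed order. For each such $u$: pick $j\in\arg\max_{i\in[\ell]}v(u\mid S_{i,t})$ (current contents); update $p(u)\leftarrow\min\{p(u),\ v(u\mid S_{j,t})/(\beta+\rho_t/B)\}$ and offer $p(u)$ to $u$. If $u$ accepts: if $v(S_{j,t}\cup\{u\})-p(S_{j,t}\cup\{u\})>\rho_t$ (current prices), set $u^*\leftarrow\{u\}$ and end the round immediately; otherwise add $u$ to $S_{j,t}$. If $u$ rejects, remove $u$ from $R$. After the round, stop if $R\setminus\left(\bigcup_{i=1}^{\ell}(S_{i,t-1}\cup S_{i,t})\cup u^*\right)=\emptyset$; otherwise start another round. 4. Let $M$ be the final value of $t$. Output $S^*\in\arg\max_{A\in\{S_{i,t}: i\in[\ell],\ t\in\{M-1,M\}\}\cup\{u^*\}}\big(v(A)-p(A)\big)$, paying each $u\in S^*$ its current price $p(u)$; $p(S^* )$ is the total payment. Notation: $S_{i,t}$ denotes the contents of that candidate set at the end of round $t$. *)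

theory Defs
  imports Main "HOL.Real"
begin

definition submodular_on :: "'a set \<Rightarrow> ('a set \<Rightarrow> real) \<Rightarrow> bool" where
  "submodular_on N v \<longleftrightarrow>
     (\<forall>X Y u. X \<subseteq> Y \<and> Y \<subseteq> N \<and> u \<in> N \<and> u \<notin> Y \<longrightarrow>
        v (Y \<union> {u}) - v Y \<le> v (X \<union> {u}) - v X)"

definition marg :: "('a set \<Rightarrow> real) \<Rightarrow> 'a \<Rightarrow> 'a set \<Rightarrow> real" where
  "marg v u S = v (S \<union> {u}) - v S"

text \<open>State of the mechanism: the set R, current prices p, the set u*,
  the candidate sets S_i of the current round (indexed by i), and a flag
  recording that the current round was ended early.\<close>
record 'a mstate =
  Rs :: "'a set"
  ps :: "'a \<Rightarrow> real"
  us :: "'a set"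
  Ss :: "nat \<Rightarrow> 'a set"
  stopped :: bool

text \<open>Tie-breaking rule: sel t u S is the index j chosen for seller u in round t
  when the current candidate sets are S. It must be an argmax of the marginals.\<close>
definition valid_sel :: "('a set \<Rightarrow> real) \<Rightarrow> nat \<Rightarrow> (nat \<Rightarrow> 'a \<Rightarrow> (nat \<Rightarrow> 'a set) \<Rightarrow> nat) \<Rightarrow> bool" where
  "valid_sel v l sel \<longleftrightarrow>
     (\<forall>t u S. sel t u S \<in> {1..l} \<and>
        (\<forall>i\<in>{1..l}. marg v u (S i) \<le> marg v u (S (sel t u S))))"

definition rho :: "real \<Rightarrow> real \<Rightarrow> nat \<Rightarrow> real" where
  "rho eps \<alpha> t = eps / \<alpha> * \<alpha> ^ t"

text \<open>Processing of one seller u in round t (truthful sellers: accept iff c u \<le> offer).\<close>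
definition step :: "('a set \<Rightarrow> real) \<Rightarrow> ('a \<Rightarrow> real) \<Rightarrow> real \<Rightarrow> real \<Rightarrow> real \<Rightarrow> real
     \<Rightarrow> (nat \<Rightarrow> 'a \<Rightarrow> (nat \<Rightarrow> 'a set) \<Rightarrow> nat) \<Rightarrow> nat \<Rightarrow> 'a \<Rightarrow> 'a mstate \<Rightarrow> 'a mstate" where
  "step v c B \<alpha> \<beta> eps sel t u st =
    (if stopped st then st else
     (let j = sel t u (Ss st);
          Sj = Ss st j;
          q = min (ps st u) (marg v u Sj / (\<beta> + rho eps \<alpha> t / B));
          p' = (ps st)(u := q)
      in if c u \<le> q then
           (if v (Sj \<union> {u}) - sum p' (Sj \<union> {u}) > rho eps \<alpha> t
            then st\<lparr>ps := p', us := {u}, stopped := True\<rparr>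
            else st\<lparr>ps := p', Ss := (Ss st)(j := Sj \<union> {u})\<rparr>)
         else st\<lparr>Rs := Rs st - {u}, ps := p'\<rparr>))"

definition round :: "'a list \<Rightarrow> ('a set \<Rightarrow> real) \<Rightarrow> ('a \<Rightarrow> real) \<Rightarrow> real \<Rightarrow> real \<Rightarrow> real \<Rightarrow> real
     \<Rightarrow> nat \<Rightarrow> (nat \<Rightarrow> 'a \<Rightarrow> (nat \<Rightarrow> 'a set) \<Rightarrow> nat) \<Rightarrow> nat \<Rightarrow> 'a mstate \<Rightarrow> 'a mstate" where
  "round ord v c B \<alpha> \<beta> eps l sel t st =
    (let L = filter (\<lambda>u. u \<in> Rs st \<and> u \<notin> (\<Union>i\<in>{1..l}. Ss st i) \<union> us st) ord
     in fold (step v c B \<alpha> \<beta> eps sel t) L (st\<lparr>Ss := (\<lambda>_. {}), stopped := False\<rparr>))"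

text \<open>run t = state at the end of round t; run 0 = state after steps 1-2.\<close>
primrec run :: "'a list \<Rightarrow> ('a set \<Rightarrow> real) \<Rightarrow> ('a \<Rightarrow> real) \<Rightarrow> real \<Rightarrow> real \<Rightarrow> real \<Rightarrow> real
     \<Rightarrow> nat \<Rightarrow> (nat \<Rightarrow> 'a \<Rightarrow> (nat \<Rightarrow> 'a set) \<Rightarrow> nat) \<Rightarrow> nat \<Rightarrow> 'a mstate" where
  "run ord v c B \<alpha> \<beta> eps l sel 0 =
     \<lparr>Rs = {u \<in> set ord. c u \<le> B}, ps = (\<lambda>_. B), us = {}, Ss = (\<lambda>_. {}), stopped = False\<rparr>"
| "run ord v c B \<alpha> \<beta> eps l sel (Suc t) =
     round ord v c B \<alpha> \<beta> eps l sel (Suc t) (run ord v c B \<alpha> \<beta> eps l sel t)"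

definition stops :: "'a list \<Rightarrow> ('a set \<Rightarrow> real) \<Rightarrow> ('a \<Rightarrow> real) \<Rightarrow> real \<Rightarrow> real \<Rightarrow> real \<Rightarrow> real
     \<Rightarrow> nat \<Rightarrow> (nat \<Rightarrow> 'a \<Rightarrow> (nat \<Rightarrow> 'a set) \<Rightarrow> nat) \<Rightarrow> nat \<Rightarrow> bool" where
  "stops ord v c B \<alpha> \<beta> eps l sel t \<longleftrightarrow> t \<ge> 1 \<and>
     (let prev = run ord v c B \<alpha> \<beta> eps l sel (t - 1); cur = run ord v c B \<alpha> \<beta> eps l sel t
      in Rs cur - ((\<Union>i\<in>{1..l}. Ss prev i \<union> Ss cur i) \<union> us cur) = {})"

definition final_round :: "'a list \<Rightarrow> ('a set \<Rightarrow> real) \<Rightarrow> ('a \<Rightarrow> real) \<Rightarrow> real \<Rightarrow> real \<Rightarrow> real \<Rightarrow> real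
     \<Rightarrow> nat \<Rightarrow> (nat \<Rightarrow> 'a \<Rightarrow> (nat \<Rightarrow> 'a set) \<Rightarrow> nat) \<Rightarrow> nat" where
  "final_round ord v c B \<alpha> \<beta> eps l sel = (LEAST t. stops ord v c B \<alpha> \<beta> eps l sel t)"

text \<open>v(S*) - p(S*): the maximum of v(A) - p(A) over the output candidates,
  with the final prices.\<close>
definition out_value :: "'a list \<Rightarrow> ('a set \<Rightarrow> real) \<Rightarrow> ('a \<Rightarrow> real) \<Rightarrow> real \<Rightarrow> real \<Rightarrow> real \<Rightarrow> real
     \<Rightarrow> nat \<Rightarrow> (nat \<Rightarrow> 'a \<Rightarrow> (nat \<Rightarrow> 'a set) \<Rightarrow> nat) \<Rightarrow> real" where
  "out_value ord v c B \<alpha> \<beta> eps l sel =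
    (let M = final_round ord v c B \<alpha> \<beta> eps l sel;
         fin = run ord v c B \<alpha> \<beta> eps l sel M;
         val = (\<lambda>A. v A - sum (ps fin) A)
     in Max ((\<lambda>A. val A) ` ({Ss (run ord v c B \<alpha> \<beta> eps l sel (M - 1)) i | i. i \<in> {1..l}}
                           \<union> {Ss fin i | i. i \<in> {1..l}} \<union> {us fin})))"

end

theory Submission
  imports Defs
begin

(* Every seller joins a candidate set at a price of at most its marginal value divided by
   beta + rho_t/B, so beta p(S) <= v(S) for every candidate set, and unless a trigger ends the
   round also v(S) - p(S) <= rho_t; hence (1 - 1/beta) v(S_{i,t}) <= rho_t.  Prices only decrease,
   so the same computation with the final prices bounds (1 - 1/beta) v(S_{i,t}) by the profit
   v - p of the output S* for the output candidates t = M-1, M.  A trigger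
   v(S_j + u) - p(S_j + u) > rho_t splits, by submodularity, into the profits of the two output
   candidates S_j and {u*}; since round M-1 ended with a trigger, rho_{M-1} is less than twice the
   profit of S*, and the geometric sum rho_1 + ... + rho_{M-2} <= rho_{M-1}/(alpha - 1) bounds the
   earlier rounds.  A trigger also needs rho_t < max v, so some round runs to completion and the
   mechanism stops. *)

lemma rho_Suc: "rho eps \<alpha> (Suc t) = \<alpha> * rho eps \<alpha> t"
  by (simp add: rho_def)

lemma rho_pos: "eps > 0 \<Longrightarrow> \<alpha> > 0 \<Longrightarrow> rho eps \<alpha> t > 0"
  by (simp add: rho_def)

lemma rho_mono: "eps \<ge> 0 \<Longrightarrow> \<alpha> \<ge> 1 \<Longrightarrow> s \<le> t \<Longrightarrow> rho eps \<alpha> s \<le> rho eps \<alpha> t"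
  unfolding rho_def by (intro mult_left_mono power_increasing) auto

lemma sum_rho_le:
  assumes "eps \<ge> 0" and "\<alpha> > 1"
  shows "(\<Sum>t\<in>{1..m}. rho eps \<alpha> t) \<le> rho eps \<alpha> (Suc m) / (\<alpha> - 1)"
proof (induction m)
  case 0
  then show ?case using assms by (simp add: rho_def)
next
  case (Suc m)
  have "(\<Sum>t\<in>{1..Suc m}. rho eps \<alpha> t) \<le> rho eps \<alpha> (Suc m) / (\<alpha> - 1) + rho eps \<alpha> (Suc m)"
    using Suc by simp
  also have "\<dots> = rho eps \<alpha> (Suc (Suc m)) / (\<alpha> - 1)"
    using assms by (simp add: rho_Suc[of _ _ "Suc m"] field_simps)
  finally show ?case .
qed

lemma submodular_on_union_singleton_le:
  assumes "submodular_on N v" and "v {} = 0" and "S \<subseteq> N" and "w \<in> N" and "w \<notin> S"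
  shows "v (S \<union> {w}) \<le> v S + v {w}"
proof -
  have "v (S \<union> {w}) - v S \<le> v ({} \<union> {w}) - v {}"
    using assms unfolding submodular_on_def by blast
  then show ?thesis
    using assms(2) by simp
qed

lemma scaled_value_le_profit:
  fixes p p' :: "'a \<Rightarrow> real" and val :: real
  assumes "\<beta> > 0" and "\<beta> * sum p S \<le> val" and "\<forall>y\<in>S. p' y \<le> p y"
  shows "(1 - 1 / \<beta>) * val \<le> val - sum p' S"
proof -
  have "\<beta> * sum p' S \<le> \<beta> * sum p S"
    using assms by (intro mult_left_mono sum_mono) auto
  then have "\<beta> * sum p' S \<le> val"
    using assms(2) by linarith
  then show ?thesis
    using assms(1) by (simp add: algebra_simps pos_le_divide_eq)
qed

lemma sum_fun_upd_notin: "x \<notin> S \<Longrightarrow> sum (f(x := y)) S = sum f S"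
  by (intro sum.cong) auto

lemma price_le_scaled_share:
  fixes q m \<beta> r :: real
  assumes "0 \<le> q" and "q \<le> m / (\<beta> + r)" and "0 < \<beta>" and "0 \<le> r"
  shows "\<beta> * q \<le> m"
proof -
  have "\<beta> * q \<le> (\<beta> + r) * q"
    using assms by (simp add: mult_right_mono)
  also have "\<dots> \<le> m"
    using assms by (simp add: pos_le_divide_eq mult.commute)
  finally show ?thesis .
qed

definition evolves_to :: "'a mstate \<Rightarrow> 'a mstate \<Rightarrow> bool" where
  "evolves_to st st' \<longleftrightarrow>
     Rs st' \<subseteq> Rs st \<and> (\<forall>y. ps st' y \<le> ps st y) \<and> (\<forall>i. Ss st i \<subseteq> Ss st' i)"

lemma evolves_to_refl: "evolves_to st st"
  by (simp add: evolves_to_def)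

lemma evolves_to_trans: "evolves_to st st' \<Longrightarrow> evolves_to st' st'' \<Longrightarrow> evolves_to st st''"
  unfolding evolves_to_def by (meson order_trans)

definition settled :: "nat \<Rightarrow> 'a mstate \<Rightarrow> 'a \<Rightarrow> bool" where
  "settled l st x \<longleftrightarrow> x \<in> (\<Union>i\<in>{1..l}. Ss st i) \<or> x \<notin> Rs st"

lemma settled_evolves_to: "settled l st x \<Longrightarrow> evolves_to st st' \<Longrightarrow> settled l st' x"
  unfolding settled_def evolves_to_def by blast

context
  fixes v :: "'a set \<Rightarrow> real" and c :: "'a \<Rightarrow> real" and B \<alpha> \<beta> eps :: real
    and sel :: "nat \<Rightarrow> 'a \<Rightarrow> (nat \<Rightarrow> 'a set) \<Rightarrow> nat" and t :: nat
begin

lemma step_stopped: "stopped st \<Longrightarrow> step v c B \<alpha> \<beta> eps sel t x st = st"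
  by (simp add: step_def)

lemma fold_step_stopped: "stopped st \<Longrightarrow> fold (step v c B \<alpha> \<beta> eps sel t) xs st = st"
  by (induction xs) (simp_all add: step_stopped)

lemma step_evolves_to: "evolves_to st (step v c B \<alpha> \<beta> eps sel t x st)"
  by (auto simp: step_def Let_def evolves_to_def)

lemma Ss_step_subset: "Ss (step v c B \<alpha> \<beta> eps sel t x st) i \<subseteq> Ss st i \<union> {x}"
  by (auto simp: step_def Let_def)

lemma fold_step_evolves_to: "evolves_to st (fold (step v c B \<alpha> \<beta> eps sel t) xs st)"
  by (induction xs arbitrary: st) (auto intro: evolves_to_refl evolves_to_trans step_evolves_to)

lemma step_settles:
  assumes "valid_sel v l sel" and "\<not> stopped (step v c B \<alpha> \<beta> eps sel t x st)"
  shows "us (step v c B \<alpha> \<beta> eps sel t x st) = us st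
    \<and> settled l (step v c B \<alpha> \<beta> eps sel t x st) x"
  using assms unfolding valid_sel_def settled_def
  by (auto simp: step_def Let_def split: if_splits)

lemma fold_step_settles:
  assumes "valid_sel v l sel" and "\<not> stopped (fold (step v c B \<alpha> \<beta> eps sel t) xs st)"
  shows "us (fold (step v c B \<alpha> \<beta> eps sel t) xs st) = us st
    \<and> (\<forall>x\<in>set xs. settled l (fold (step v c B \<alpha> \<beta> eps sel t) xs st) x)"
  using assms(2)
proof (induction xs arbitrary: st)
  case Nil
  then show ?case by simp
next
  case (Cons x xs)
  have "\<not> stopped (step v c B \<alpha> \<beta> eps sel t x st)"
    using Cons.prems fold_step_stopped by fastforce
  with Cons show ?case
    using step_settles[OF assms(1)] settled_evolves_to fold_step_evolves_to by fastforce
qed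

end

locale bfm_swm =
  fixes N :: "'a set" and ord :: "'a list"
    and v :: "'a set \<Rightarrow> real" and c :: "'a \<Rightarrow> real"
    and B \<alpha> \<beta> eps :: real and l :: nat
    and sel :: "nat \<Rightarrow> 'a \<Rightarrow> (nat \<Rightarrow> 'a set) \<Rightarrow> nat"
  assumes set_ord: "set ord = N" and distinct_ord: "distinct ord"
    and v_empty: "v {} = 0" and v_nonneg: "\<forall>X. X \<subseteq> N \<longrightarrow> v X \<ge> 0"
    and submodular: "submodular_on N v"
    and c_nonneg: "\<forall>u\<in>N. c u \<ge> 0"
    and B_pos: "B > 0" and \<alpha>_gt_1: "\<alpha> > 1" and \<beta>_gt_1: "\<beta> > 1" and eps_pos: "eps > 0"
    and l_cases: "l \<in> {1, 2}"
    and sel_valid: "valid_sel v l sel"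
begin

abbreviation "\<rho> t \<equiv> rho eps \<alpha> t"
abbreviation "process t \<equiv> step v c B \<alpha> \<beta> eps sel t"
abbreviation "state t \<equiv> run ord v c B \<alpha> \<beta> eps l sel t"

lemma finite_N: "finite N"
  using set_ord by auto

lemma sel_range: "sel t u S \<in> {1..l}"
  using sel_valid unfolding valid_sel_def by blast

(* The last conjunct records the trigger that ended the round: w is u* and Ss st j the candidate
   set it was tested against. *)
definition round_invariant :: "nat \<Rightarrow> 'a mstate \<Rightarrow> bool" where
  "round_invariant t st \<longleftrightarrow>
     (\<forall>i. Ss st i \<subseteq> N) \<and> (\<forall>i. \<forall>y\<in>Ss st i. 0 \<le> ps st y)
   \<and> (\<forall>i. \<beta> * sum (ps st) (Ss st i) \<le> v (Ss st i))
   \<and> (\<forall>i. v (Ss st i) - sum (ps st) (Ss st i) \<le> \<rho> t)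
   \<and> (stopped st \<longrightarrow> (\<exists>w j. us st = {w} \<and> w \<in> N \<and> j \<in> {1..l} \<and> w \<notin> Ss st j \<and> 0 \<le> ps st w
        \<and> \<rho> t < v (Ss st j \<union> {w}) - sum (ps st) (Ss st j \<union> {w})))"

lemma round_invariant_reprice:
  assumes "round_invariant t st" and "\<not> stopped st" and "\<forall>i. x \<notin> Ss st i"
  shows "round_invariant t (st\<lparr>ps := (ps st)(x := q)\<rparr>)"
proof -
  have "sum ((ps st)(x := q)) (Ss st i) = sum (ps st) (Ss st i)" for i
    using assms(3) by (simp add: sum_fun_upd_notin del: fun_upd_apply)
  then show ?thesis
    using assms unfolding round_invariant_def by auto
qed

lemma step_invariant:
  assumes inv: "round_invariant t st" and x_N: "x \<in> N" and fresh: "\<forall>i. x \<notin> Ss st i"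
  shows "round_invariant t (process t x st)"
proof (cases "stopped st")
  case True
  then show ?thesis using inv by (simp add: step_stopped)
next
  case running: False
  define j where "j = sel t x (Ss st)"
  define S where "S = Ss st j"
  define q where "q = min (ps st x) (marg v x S / (\<beta> + \<rho> t / B))"
  define p' where "p' = (ps st)(x := q)"
  have step_eq: "process t x st =
      (if c x \<le> q then
         (if v (S \<union> {x}) - sum p' (S \<union> {x}) > \<rho> t
          then st\<lparr>ps := p', us := {x}, stopped := True\<rparr>
          else st\<lparr>ps := p', Ss := (Ss st)(j := S \<union> {x})\<rparr>)
       else st\<lparr>Rs := Rs st - {x}, ps := p'\<rparr>)"
    using running by (simp add: step_def Let_def j_def S_def q_def p'_def)
  have reprice: "round_invariant t (st\<lparr>ps := p'\<rparr>)"
    unfolding p'_def using inv running fresh by (rule round_invariant_reprice)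
  show ?thesis
  proof (cases "c x \<le> q")
    case False
    then show ?thesis using reprice step_eq unfolding round_invariant_def by simp
  next
    case accepted: True
    have q_nonneg: "0 \<le> q" using accepted c_nonneg x_N by force
    have S_N: "S \<subseteq> N"
      using inv unfolding round_invariant_def S_def by blast
    have "sum p' S = sum (ps st) S"
      using fresh by (simp add: S_def p'_def sum_fun_upd_notin del: fun_upd_apply)
    then have sum_S_x: "sum p' (S \<union> {x}) = sum (ps st) S + q"
      using S_N finite_N fresh by (simp add: S_def p'_def finite_subset fun_upd_same del: fun_upd_apply)
    show ?thesis
    proof (cases "v (S \<union> {x}) - sum p' (S \<union> {x}) > \<rho> t")
      case trigger: True
      have "\<exists>w j'. {x} = {w} \<and> w \<in> N \<and> j' \<in> {1..l} \<and> w \<notin> Ss st j' \<and> 0 \<le> p' w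
          \<and> \<rho> t < v (Ss st j' \<union> {w}) - sum p' (Ss st j' \<union> {w})"
        using x_N sel_range fresh q_nonneg trigger unfolding S_def
        by (intro exI[of _ x] exI[of _ j]) (simp add: p'_def j_def)
      then show ?thesis
        using reprice step_eq accepted trigger unfolding round_invariant_def by simp
    next
      case False
      have "\<beta> * q \<le> marg v x S"
        using q_nonneg \<beta>_gt_1 B_pos rho_pos[OF eps_pos, of \<alpha> t] \<alpha>_gt_1
        by (intro price_le_scaled_share[of q _ \<beta> "\<rho> t / B"]) (auto simp: q_def)
      moreover have "\<beta> * sum (ps st) S \<le> v S"
        using inv unfolding round_invariant_def S_def by blast
      ultimately have "\<beta> * sum p' (S \<union> {x}) \<le> v (S \<union> {x})"
        using sum_S_x by (simp add: marg_def distrib_left)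
      then show ?thesis
        using reprice step_eq accepted False q_nonneg x_N running
        unfolding round_invariant_def S_def p'_def by auto
    qed
  qed
qed

lemma fold_step_invariant:
  assumes "distinct xs" and "set xs \<subseteq> N" and "round_invariant t st"
    and "\<forall>i. Ss st i \<inter> set xs = {}"
  shows "round_invariant t (fold (process t) xs st)"
  using assms
proof (induction xs arbitrary: st)
  case Nil
  then show ?case by simp
next
  case (Cons x xs)
  have "round_invariant t (process t x st)"
    using Cons.prems by (intro step_invariant) auto
  moreover have "\<forall>i. Ss (process t x st) i \<inter> set xs = {}"
    using Cons.prems Ss_step_subset by fastforce
  ultimately show ?case
    using Cons by simp
qed

definition pending :: "'a mstate \<Rightarrow> 'a list" where
  "pending st = filter (\<lambda>u. u \<in> Rs st \<and> u \<notin> (\<Union>i\<in>{1..l}. Ss st i) \<union> us st) ord"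

definition round_start :: "'a mstate \<Rightarrow> 'a mstate" where
  "round_start st = st\<lparr>Ss := (\<lambda>_. {}), stopped := False\<rparr>"

lemma run_Suc_fold:
  "state (Suc s) = fold (process (Suc s)) (pending (state s)) (round_start (state s))"
  by (simp add: round_def Let_def pending_def round_start_def)

lemma run_invariant: "t \<ge> 1 \<Longrightarrow> round_invariant t (state t)"
proof -
  assume "t \<ge> 1"
  then obtain s where t: "t = Suc s"
    by (cases t) auto
  have "round_invariant t (round_start (state s))"
    using rho_pos[OF eps_pos, of \<alpha> t] \<alpha>_gt_1 v_empty
    by (simp add: round_invariant_def round_start_def)
  then show ?thesis
    unfolding t run_Suc_fold
    by (intro fold_step_invariant) (auto simp: pending_def distinct_ord set_ord round_start_def)
qed

lemma run_Suc_evolves: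
  "Rs (state (Suc s)) \<subseteq> Rs (state s) \<and> (\<forall>y. ps (state (Suc s)) y \<le> ps (state s) y)"
proof -
  have "evolves_to (round_start (state s)) (state (Suc s))"
    unfolding run_Suc_fold by (rule fold_step_evolves_to)
  then show ?thesis
    by (simp add: evolves_to_def round_start_def)
qed

lemma Rs_run_subset: "Rs (state t) \<subseteq> N"
  using run_Suc_evolves by (induction t) (auto simp: set_ord)

lemma ps_run_antimono: "s \<le> t \<Longrightarrow> ps (state t) y \<le> ps (state s) y"
  using lift_Suc_antimono_le[of "\<lambda>n. ps (state n) y"] run_Suc_evolves by blast

lemma run_Suc_not_stopped:
  assumes "\<not> stopped (state (Suc s))"
  shows "us (state (Suc s)) = us (state s)"
    and "\<forall>x\<in>set (pending (state s)). settled l (state (Suc s)) x"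
  using fold_step_settles[OF sel_valid] assms unfolding run_Suc_fold
  by (simp_all add: round_start_def)

lemma stops_if_not_stopped:
  assumes "t \<ge> 1" and "\<not> stopped (state t)"
  shows "stops ord v c B \<alpha> \<beta> eps l sel t"
proof -
  obtain s where t: "t = Suc s"
    using assms(1) by (cases t) auto
  have "x \<in> (\<Union>i\<in>{1..l}. Ss (state s) i \<union> Ss (state t) i) \<union> us (state t)"
    if x: "x \<in> Rs (state t)" for x
  proof (rule ccontr)
    assume x_open: "x \<notin> (\<Union>i\<in>{1..l}. Ss (state s) i \<union> Ss (state t) i) \<union> us (state t)"
    moreover have "x \<in> set ord" "x \<in> Rs (state s)"
      using x Rs_run_subset[of t] run_Suc_evolves[of s] by (auto simp: t set_ord)
    ultimately have "settled l (state t) x"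
      using run_Suc_not_stopped assms(2) by (simp add: t pending_def)
    with x_open x show False
      by (auto simp: settled_def)
  qed
  then show ?thesis
    using assms(1) by (auto simp: stops_def Let_def t)
qed

lemma stopped_rho_lt_Max:
  assumes "t \<ge> 1" and "stopped (state t)"
  shows "\<rho> t < Max (v ` Pow N)"
proof -
  have inv: "round_invariant t (state t)"
    using assms(1) by (rule run_invariant)
  then obtain w j where w: "w \<in> N" "0 \<le> ps (state t) w"
    and trigger: "\<rho> t < v (Ss (state t) j \<union> {w}) - sum (ps (state t)) (Ss (state t) j \<union> {w})"
    using assms(2) unfolding round_invariant_def by blast
  have "0 \<le> sum (ps (state t)) (Ss (state t) j \<union> {w})"
    using inv w(2) unfolding round_invariant_def by (intro sum_nonneg) auto
  moreover have "v (Ss (state t) j \<union> {w}) \<le> Max (v ` Pow N)"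
    using inv w(1) finite_N unfolding round_invariant_def by (intro Max_ge) auto
  ultimately show ?thesis
    using trigger by linarith
qed

lemma exists_stops: "\<exists>t. stops ord v c B \<alpha> \<beta> eps l sel t"
proof -
  obtain n where n: "Max (v ` Pow N) / eps < \<alpha> ^ n"
    using real_arch_pow[OF \<alpha>_gt_1] by blast
  have "Max (v ` Pow N) < \<rho> (Suc n)"
    using n eps_pos \<alpha>_gt_1 by (simp add: rho_def pos_divide_less_eq mult.commute)
  then have "\<not> stopped (state (Suc n))"
    using stopped_rho_lt_Max[of "Suc n"] by fastforce
  then show ?thesis
    using stops_if_not_stopped[of "Suc n"] by auto
qed

abbreviation "M \<equiv> final_round ord v c B \<alpha> \<beta> eps l sel"
abbreviation "out \<equiv> out_value ord v c B \<alpha> \<beta> eps l sel"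
abbreviation "profit T A \<equiv> v A - sum (ps (state T)) A"
abbreviation "output_candidates \<equiv>
  {Ss (state (M - 1)) i | i. i \<in> {1..l}} \<union> {Ss (state M) i | i. i \<in> {1..l}} \<union> {us (state M)}"

lemma final_round_stops: "stops ord v c B \<alpha> \<beta> eps l sel M"
  unfolding final_round_def using exists_stops by (rule LeastI_ex)

lemma final_round_ge_1: "M \<ge> 1"
  using final_round_stops by (simp add: stops_def)

lemma stopped_before_final_round: "1 \<le> t \<Longrightarrow> t < M \<Longrightarrow> stopped (state t)"
  using not_less_Least[of t "stops ord v c B \<alpha> \<beta> eps l sel"] stops_if_not_stopped
  unfolding final_round_def by blast

lemma profit_le_out_value:
  assumes "A \<in> output_candidates"
  shows "profit M A \<le> out"
proof -
  have "finite output_candidates"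
    by (simp add: setcompr_eq_image)
  then show ?thesis
    using assms unfolding out_value_def Let_def by (intro Max_ge) auto
qed

lemma trigger_profit_gt:
  assumes "1 \<le> t" and "t \<le> T" and "stopped (state t)"
  shows "\<exists>w j. us (state t) = {w} \<and> j \<in> {1..l} \<and> \<rho> t < profit T (Ss (state t) j) + profit T {w}"
proof -
  have inv: "round_invariant t (state t)"
    using assms(1) by (rule run_invariant)
  then obtain w j where w: "us (state t) = {w}" "w \<in> N" "j \<in> {1..l}" "w \<notin> Ss (state t) j"
    and trigger: "\<rho> t < profit t (Ss (state t) j \<union> {w})"
    using assms(3) unfolding round_invariant_def by blast
  define S where "S = Ss (state t) j"
  have S_N: "S \<subseteq> N"
    using inv unfolding round_invariant_def S_def by blast
  have "sum (ps (state T)) (S \<union> {w}) \<le> sum (ps (state t)) (S \<union> {w})"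
    using ps_run_antimono[OF assms(2)] by (rule sum_mono)
  moreover have "sum (ps (state T)) (S \<union> {w}) = sum (ps (state T)) S + ps (state T) w"
    using S_N finite_N w(4) by (simp add: S_def finite_subset)
  moreover have "v (S \<union> {w}) \<le> v S + v {w}"
    using submodular v_empty S_N w(2,4) unfolding S_def by (rule submodular_on_union_singleton_le)
  ultimately show ?thesis
    using w trigger unfolding S_def by (intro exI[of _ w] exI[of _ j]) auto
qed

lemma candidate_scaled_value_le_profit:
  assumes "1 \<le> t" and "t \<le> T"
  shows "(1 - 1 / \<beta>) * v (Ss (state t) i) \<le> profit T (Ss (state t) i)"
  using \<beta>_gt_1 run_invariant[OF assms(1)] ps_run_antimono[OF assms(2)]
  unfolding round_invariant_def by (intro scaled_value_le_profit) auto

lemma candidate_scaled_value_le_rho: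
  assumes "1 \<le> t"
  shows "(1 - 1 / \<beta>) * v (Ss (state t) i) \<le> \<rho> t"
proof -
  have "profit t (Ss (state t) i) \<le> \<rho> t"
    using run_invariant[OF assms] unfolding round_invariant_def by blast
  with candidate_scaled_value_le_profit[OF assms order.refl, of i] show ?thesis
    by linarith
qed

lemma candidate_scaled_value_le_out_value:
  assumes "i \<in> {1..l}" and "t \<in> {M - 1, M}" and "1 \<le> t"
  shows "(1 - 1 / \<beta>) * v (Ss (state t) i) \<le> out"
  using candidate_scaled_value_le_profit[OF assms(3), of M i]
    profit_le_out_value[of "Ss (state t) i"] assms
  by fastforce

lemma out_value_nonneg: "0 \<le> out"
proof -
  have "(1 - 1 / \<beta>) * v (Ss (state M) 1) \<le> out"
    using l_cases final_round_ge_1 by (intro candidate_scaled_value_le_out_value) auto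
  moreover have "0 \<le> (1 - 1 / \<beta>) * v (Ss (state M) 1)"
    using \<beta>_gt_1 run_invariant[OF final_round_ge_1] v_nonneg
    unfolding round_invariant_def by (intro mult_nonneg_nonneg) auto
  ultimately show ?thesis
    by linarith
qed

lemma rho_penultimate_lt:
  assumes "2 \<le> M"
  shows "\<rho> (M - 1) < 2 * out"
proof (cases "stopped (state M)")
  case True
  obtain w j where w: "us (state M) = {w}" "j \<in> {1..l}"
    and "\<rho> M < profit M (Ss (state M) j) + profit M {w}"
    using trigger_profit_gt[OF final_round_ge_1 order.refl True] by blast
  moreover have "profit M (Ss (state M) j) \<le> out" "profit M {w} \<le> out"
    using w by (auto intro!: profit_le_out_value simp del: sum.insert)
  moreover have "\<rho> (M - 1) \<le> \<rho> M"
    using eps_pos \<alpha>_gt_1 by (intro rho_mono) auto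
  ultimately show ?thesis
    by linarith
next
  case False
  \<comment> \<open>Round M ran to completion, so u* is still the seller that ended round M-1.\<close>
  have M: "M = Suc (M - 1)"
    using assms by simp
  have penultimate: "1 \<le> M - 1"
    using assms by simp
  then have "stopped (state (M - 1))"
    by (intro stopped_before_final_round) auto
  then obtain w j where w: "us (state (M - 1)) = {w}" "j \<in> {1..l}"
    and "\<rho> (M - 1) < profit M (Ss (state (M - 1)) j) + profit M {w}"
    using trigger_profit_gt[OF penultimate diff_le_self] by blast
  moreover have "us (state M) = us (state (M - 1))"
    using run_Suc_not_stopped(1)[of "M - 1"] False M by simp
  then have "profit M (Ss (state (M - 1)) j) \<le> out" "profit M {w} \<le> out"
    using w by (auto intro!: profit_le_out_value simp del: sum.insert)
  ultimately show ?thesis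
    by linarith
qed

lemma sum_candidate_values_le:
  assumes i: "i \<in> {1..l}"
  shows "(\<Sum>t\<in>{1..M}. v (Ss (state t) i)) \<le> 2 * \<alpha> * out / ((\<alpha> - 1) * (1 - 1 / \<beta>))"
proof -
  define k where "k = 1 - 1 / \<beta>"
  have k_pos: "0 < k"
    using \<beta>_gt_1 by (simp add: k_def)
  have out_le: "out \<le> 2 * \<alpha> * out / (\<alpha> - 1)"
    and out_split: "2 * out / (\<alpha> - 1) + 2 * out = 2 * \<alpha> * out / (\<alpha> - 1)"
    using out_value_nonneg \<alpha>_gt_1 by (simp_all add: field_simps)
  have "k * (\<Sum>t\<in>{1..M}. v (Ss (state t) i)) \<le> 2 * \<alpha> * out / (\<alpha> - 1)"
  proof (cases "M = 1")
    case True
    then show ?thesis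
      using candidate_scaled_value_le_out_value[OF i, of 1] out_le by (simp add: k_def)
  next
    case False
    then obtain m where M: "M = Suc (Suc m)"
      using final_round_ge_1 by (cases M; cases "M - 1") auto
    have "(\<Sum>t\<in>{1..m}. k * v (Ss (state t) i)) \<le> (\<Sum>t\<in>{1..m}. \<rho> t)"
      using candidate_scaled_value_le_rho unfolding k_def by (intro sum_mono) auto
    also have "\<dots> \<le> \<rho> (Suc m) / (\<alpha> - 1)"
      using eps_pos \<alpha>_gt_1 by (intro sum_rho_le) auto
    also have "\<dots> \<le> 2 * out / (\<alpha> - 1)"
      using rho_penultimate_lt \<alpha>_gt_1 by (simp add: M divide_right_mono)
    finally have early: "(\<Sum>t\<in>{1..m}. k * v (Ss (state t) i)) \<le> 2 * out / (\<alpha> - 1)" .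
    have "k * v (Ss (state (Suc m)) i) \<le> out"
      using candidate_scaled_value_le_out_value[OF i, of "Suc m"] by (simp add: k_def M)
    moreover have "k * v (Ss (state M) i) \<le> out"
      using candidate_scaled_value_le_out_value[OF i, of M] final_round_ge_1 by (simp add: k_def)
    moreover have "(\<Sum>t\<in>{1..M}. f t) = (\<Sum>t\<in>{1..m}. f t) + f (Suc m) + f M" for f :: "nat \<Rightarrow> real"
      by (simp add: M)
    ultimately show ?thesis
      using early out_split by (simp only: distrib_left sum_distrib_left)
  qed
  then show ?thesis
    using k_pos \<alpha>_gt_1 by (simp add: k_def pos_le_divide_eq mult.commute)
qed

end

theorem lemma4p7:
  fixes N :: "'a set" and ord :: "'a list"
    and v :: "'a set \<Rightarrow> real" and c :: "'a \<Rightarrow> real"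
    and B \<alpha> \<beta> eps :: real and l :: nat
    and sel :: "nat \<Rightarrow> 'a \<Rightarrow> (nat \<Rightarrow> 'a set) \<Rightarrow> nat"
  assumes "set ord = N" and "distinct ord"
    and "v {} = 0" and "\<forall>X. X \<subseteq> N \<longrightarrow> v X \<ge> 0" and "submodular_on N v"
    and "\<forall>u\<in>N. c u \<ge> 0"
    and "B > 0" and "\<alpha> > 1" and "\<beta> > 1" and "eps > 0" and "l \<in> {1, 2}"
    and "valid_sel v l sel"
  shows "(\<exists>t. stops ord v c B \<alpha> \<beta> eps l sel t) \<and>
    (\<Sum>i\<in>{1..l}. \<Sum>t\<in>{1..final_round ord v c B \<alpha> \<beta> eps l sel}.
        v (Ss (run ord v c B \<alpha> \<beta> eps l sel t) i))
    \<le> 2 * real l * \<alpha> * out_value ord v c B \<alpha> \<beta> eps l sel / ((\<alpha> - 1) * (1 - 1 / \<beta>))"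
proof -
  interpret bfm_swm N ord v c B \<alpha> \<beta> eps l sel
    using assms by (simp add: bfm_swm_def)
  have "(\<Sum>i\<in>{1..l}. \<Sum>t\<in>{1..M}. v (Ss (state t) i))
      \<le> real (card {1..l}) * (2 * \<alpha> * out / ((\<alpha> - 1) * (1 - 1 / \<beta>)))"
    using sum_candidate_values_le by (rule sum_bounded_above)
  also have "\<dots> = 2 * real l * \<alpha> * out / ((\<alpha> - 1) * (1 - 1 / \<beta>))"
    by simp
  finally show ?thesis
    using exists_stops by blast
qed

end
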